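(* Let $\beta,k\in\mathbb{R}$, $r>0$, and let $\gamma\in C^2([0,r])$ satisfy $-\gamma''-\beta|\gamma'|=k$ and $\gamma'>0$ in $(0,r)$. Let $\varepsilon>0$ and suppose that $r\ge2\varepsilon$ or $\gamma'(r)=0$. Then, with $r_1:=\min\{\varepsilon,r\}$ and $r_2:=\min\{2\varepsilon,r\}$, $$a^+_\varepsilon(\beta)\big(\gamma(r_1)-\gamma(0)\big)-a^-_\varepsilon(\beta)\big(\gamma(r_2)-\gamma(r_1)\big)\le\varepsilon k.$$
   Context: Coefficients: for $\beta\neq0$, $a^+_\varepsilon(\beta):=\frac{\beta}{e^{\varepsilon\beta}-1}$ and $a^-_\varepsilon(\beta):=\frac{\beta}{1-e^{-\varepsilon\beta}}$; for $\beta=0$, $a^+_\varepsilon(0):=a^-_\varepsilon(0):=1/\varepsilon$. *)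

theory Defs
  imports "HOL-Analysis.Analysis"
begin

definition a_plus :: "real \<Rightarrow> real \<Rightarrow> real" where
  "a_plus \<epsilon> \<beta> = (if \<beta> = 0 then 1 / \<epsilon> else \<beta> / (exp (\<epsilon> * \<beta>) - 1))"

definition a_minus :: "real \<Rightarrow> real \<Rightarrow> real" where
  "a_minus \<epsilon> \<beta> = (if \<beta> = 0 then 1 / \<epsilon> else \<beta> / (1 - exp (- \<epsilon> * \<beta>)))"

end

(*
  On (0, r) the equation reads \<gamma>'' = - k - \<beta> \<gamma>'. With the integrating factor exp (\<beta> x),
  \<gamma>' is explicit in terms of int_exp \<beta> t = \<integral>\<^sub>0\<^sup>t exp (\<beta> s) ds, which also gives
  a\<^sup>+ = 1 / int_exp \<beta> \<epsilon> and a\<^sup>- = exp (\<beta> \<epsilon>) / int_exp \<beta> \<epsilon>.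
  The shift identity \<gamma>' x - exp (\<beta> \<epsilon>) \<gamma>' (x + \<epsilon>) = k int_exp \<beta> \<epsilon> integrates to
  equality in the claim when r \<ge> 2 \<epsilon>. If instead \<gamma>' r = 0, then
  \<gamma>' x = k int_exp \<beta> (r - x) with k > 0, so \<gamma>' \<le> k int_exp \<beta> \<epsilon> where r - x \<le> \<epsilon>,
  and the mean value inequality bounds what is missing from the equality.
*)

theory Submission
  imports Defs
begin

definition int_exp :: "real \<Rightarrow> real \<Rightarrow> real" where
  "int_exp \<beta> t = (if \<beta> = 0 then t else (exp (\<beta> * t) - 1) / \<beta>)"

lemma int_exp_has_real_derivative: "(int_exp \<beta> has_real_derivative exp (\<beta> * t)) (at t)"
proof (cases "\<beta> = 0")
  case True
  then show ?thesis by (simp add: int_exp_def[abs_def])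
next
  case False
  then show ?thesis
    unfolding int_exp_def[abs_def] by (auto intro!: derivative_eq_intros)
qed

lemma continuous_on_int_exp: "continuous_on S (int_exp \<beta>)"
  by (rule DERIV_continuous_on, rule has_field_derivative_at_within, rule int_exp_has_real_derivative)

lemma int_exp_zero [simp]: "int_exp \<beta> 0 = 0"
  by (simp add: int_exp_def)

lemma int_exp_add: "int_exp \<beta> (s + t) = int_exp \<beta> s + exp (\<beta> * s) * int_exp \<beta> t"
  by (simp add: int_exp_def exp_add diff_divide_distrib algebra_simps)

lemma strict_mono_int_exp: "strict_mono (int_exp \<beta>)"
  by (rule strict_monoI, rule DERIV_pos_imp_increasing) (auto intro: int_exp_has_real_derivative)

lemma int_exp_pos: "t > 0 \<Longrightarrow> int_exp \<beta> t > 0"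
  using strict_monoD[OF strict_mono_int_exp, of 0 t] by simp

lemma a_plus_eq: "a_plus \<epsilon> \<beta> = 1 / int_exp \<beta> \<epsilon>"
  by (simp add: a_plus_def int_exp_def mult.commute)

lemma a_minus_eq: "a_minus \<epsilon> \<beta> = exp (\<beta> * \<epsilon>) / int_exp \<beta> \<epsilon>"
proof (cases "\<beta> = 0 \<or> \<epsilon> = 0")
  case True
  then show ?thesis by (auto simp: a_minus_def int_exp_def)
next
  case False
  then have "exp (\<beta> * \<epsilon>) \<noteq> 1" by simp
  then show ?thesis
    using False by (simp add: a_minus_def int_exp_def exp_minus field_simps)
qed

lemma linear_ode_solution:
  fixes p :: "real \<Rightarrow> real"
  assumes "a < b" and cont: "continuous_on {a..b} p"
    and ode: "\<And>x. x \<in> {a<..<b} \<Longrightarrow> (p has_real_derivative - k - \<beta> * p x) (at x)"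
    and x: "x \<in> {a..b}" and c: "c \<in> {a..b}"
  shows "p x = exp (\<beta> * (c - x)) * p c + k * int_exp \<beta> (c - x)"
proof -
  define w where "w y = exp (\<beta> * y) * p y + k * int_exp \<beta> y" for y
  have "continuous_on {a..b} w"
    unfolding w_def
    by (intro continuous_intros cont continuous_on_int_exp)
  moreover have "(w has_real_derivative 0) (at y)" if "a < y" "y < b" for y
  proof -
    have "(w has_real_derivative
            \<beta> * exp (\<beta> * y) * p y + exp (\<beta> * y) * (- k - \<beta> * p y) + k * exp (\<beta> * y)) (at y)"
      unfolding w_def using that
      by (auto intro!: derivative_eq_intros ode int_exp_has_real_derivative)
    then show ?thesis by (simp add: algebra_simps)
  qed
  ultimately have "w y = w a" if "y \<in> {a..b}" for y
    using DERIV_isconst2[OF \<open>a < b\<close>] that by auto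
  then have "w x = w c" using x c by metis
  then have "exp (\<beta> * x) * p x = exp (\<beta> * c) * p c + k * (int_exp \<beta> c - int_exp \<beta> x)"
    by (simp add: w_def algebra_simps)
  also have "int_exp \<beta> c - int_exp \<beta> x = exp (\<beta> * x) * int_exp \<beta> (c - x)"
    using int_exp_add[of \<beta> x "c - x"] by simp
  finally show ?thesis
    by (simp add: field_simps exp_diff right_diff_distrib)
qed

lemma linear_ode_shift:
  fixes p :: "real \<Rightarrow> real"
  assumes "a < b" "continuous_on {a..b} p"
    and "\<And>x. x \<in> {a<..<b} \<Longrightarrow> (p has_real_derivative - k - \<beta> * p x) (at x)"
    and "x \<in> {a..b}" "x + \<epsilon> \<in> {a..b}"
  shows "p x - exp (\<beta> * \<epsilon>) * p (x + \<epsilon>) = k * int_exp \<beta> \<epsilon>"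
proof -
  have "p (x + \<epsilon>) = exp (- \<beta> * \<epsilon>) * p x + k * int_exp \<beta> (- \<epsilon>)"
    using linear_ode_solution[OF assms(1-3,5,4)] by simp
  moreover have "exp (\<beta> * \<epsilon>) * int_exp \<beta> (- \<epsilon>) = - int_exp \<beta> \<epsilon>"
    using int_exp_add[of \<beta> \<epsilon> "- \<epsilon>"] by simp
  ultimately show ?thesis
    by (simp add: algebra_simps exp_minus_inverse mult.assoc[symmetric] exp_add[symmetric])
qed

lemma increment_le_of_derivative_le:
  fixes f :: "real \<Rightarrow> real"
  assumes "s \<le> t" "continuous_on {s..t} f"
    and "\<And>x. x \<in> {s<..<t} \<Longrightarrow> (f has_real_derivative f' x) (at x)"
    and "\<And>x. x \<in> {s<..<t} \<Longrightarrow> f' x \<le> M"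
  shows "f t - f s \<le> (t - s) * M"
proof -
  have "(\<lambda>x. f x - M * x) t \<le> (\<lambda>x. f x - M * x) s"
  proof (rule DERIV_nonpos_imp_decreasing_open[OF \<open>s \<le> t\<close>])
    show "\<exists>y. ((\<lambda>x. f x - M * x) has_real_derivative y) (at x) \<and> y \<le> 0" if "s < x" "x < t" for x
      using that assms(3,4) by (fastforce intro!: derivative_eq_intros)
    show "continuous_on {s..t} (\<lambda>x. f x - M * x)"
      by (intro continuous_intros assms(2))
  qed
  then show ?thesis by (simp add: algebra_simps)
qed

lemma linear_ode_primitive_shift:
  fixes g p :: "real \<Rightarrow> real"
  assumes "a < b" and g_cont: "continuous_on {a..b} g"
    and g_deriv: "\<And>x. x \<in> {a<..<b} \<Longrightarrow> (g has_real_derivative p x) (at x)"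
    and p_cont: "continuous_on {a..b} p"
    and ode: "\<And>x. x \<in> {a<..<b} \<Longrightarrow> (p has_real_derivative - k - \<beta> * p x) (at x)"
    and "0 \<le> \<epsilon>" "a \<le> t" "t + \<epsilon> \<le> b"
  shows "g t - exp (\<beta> * \<epsilon>) * g (t + \<epsilon>) - (g a - exp (\<beta> * \<epsilon>) * g (a + \<epsilon>))
           = (t - a) * (k * int_exp \<beta> \<epsilon>)"
proof (cases "t = a")
  case False
  with \<open>a \<le> t\<close> have "a < t" by simp
  define \<Phi> where "\<Phi> x = g x - exp (\<beta> * \<epsilon>) * g (x + \<epsilon>) - k * int_exp \<beta> \<epsilon> * x" for x
  have "continuous_on {a..t} g"
    using g_cont by (rule continuous_on_subset) (use assms(6,8) in auto)
  moreover have "continuous_on {a..t} (\<lambda>x. g (x + \<epsilon>))"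
  proof (rule continuous_on_compose2[OF g_cont])
    show "continuous_on {a..t} (\<lambda>x. x + \<epsilon>)" by (intro continuous_intros)
    show "(\<lambda>x. x + \<epsilon>) ` {a..t} \<subseteq> {a..b}" using assms(6,8) by (simp add: image_subset_iff)
  qed
  ultimately have "continuous_on {a..t} \<Phi>"
    unfolding \<Phi>_def by (intro continuous_intros)
  moreover have "(\<Phi> has_real_derivative 0) (at y)" if "a < y" "y < t" for y
  proof -
    have "(g has_real_derivative p y) (at y)"
      using g_deriv that assms(6,8) by simp
    moreover have "((\<lambda>x. g (x + \<epsilon>)) has_real_derivative p (y + \<epsilon>)) (at y)"
      using g_deriv[of "y + \<epsilon>"] that assms(6-8) by (simp add: DERIV_shift)
    ultimately have "(\<Phi> has_real_derivative p y - exp (\<beta> * \<epsilon>) * p (y + \<epsilon>) - k * int_exp \<beta> \<epsilon>) (at y)"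
      unfolding \<Phi>_def by (intro DERIV_diff DERIV_cmult DERIV_cmult_Id)
    moreover have "p y - exp (\<beta> * \<epsilon>) * p (y + \<epsilon>) = k * int_exp \<beta> \<epsilon>"
      using linear_ode_shift[OF \<open>a < b\<close> p_cont ode] that assms(6-8) by simp
    ultimately show ?thesis by simp
  qed
  ultimately have "\<Phi> t = \<Phi> a"
    by (rule DERIV_isconst2[OF \<open>a < t\<close>]) (use \<open>a < t\<close> in auto)
  then show ?thesis by (simp add: \<Phi>_def algebra_simps)
qed simp

lemma linear_ode_stopped_bound:
  fixes g p :: "real \<Rightarrow> real"
  assumes "0 < r" and g_cont: "continuous_on {0..r} g"
    and g_deriv: "\<And>x. x \<in> {0<..<r} \<Longrightarrow> (g has_real_derivative p x) (at x)"
    and p_cont: "continuous_on {0..r} p"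
    and ode: "\<And>x. x \<in> {0<..<r} \<Longrightarrow> (p has_real_derivative - k - \<beta> * p x) (at x)"
    and p_pos: "\<And>x. x \<in> {0<..<r} \<Longrightarrow> p x > 0"
    and "p r = 0" "0 < \<epsilon>" "r < 2 * \<epsilon>"
  shows "g (min \<epsilon> r) - g 0 - exp (\<beta> * \<epsilon>) * (g r - g (min \<epsilon> r)) \<le> \<epsilon> * (k * int_exp \<beta> \<epsilon>)"
proof -
  have p_eq: "p x = k * int_exp \<beta> (r - x)" if "x \<in> {0..r}" for x
    using linear_ode_solution[OF \<open>0 < r\<close> p_cont ode that, of r] \<open>0 < r\<close> \<open>p r = 0\<close> by simp
  have "0 < k * int_exp \<beta> (r / 2)"
    using p_pos[of "r / 2"] p_eq[of "r / 2"] \<open>0 < r\<close> by simp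
  with int_exp_pos[of "r / 2" \<beta>] \<open>0 < r\<close> have "0 < k"
    by (simp add: zero_less_mult_iff)
  have p_le: "p x \<le> k * int_exp \<beta> \<epsilon>" if "x \<in> {0<..<r}" "r - x \<le> \<epsilon>" for x
    using p_eq[of x] that \<open>0 < k\<close> strict_mono_less_eq[OF strict_mono_int_exp] by simp
  have increment_le: "g t - g s \<le> (t - s) * (k * int_exp \<beta> \<epsilon>)"
    if "0 \<le> s" "s \<le> t" "t \<le> r" "r - s \<le> \<epsilon>" for s t
  proof (rule increment_le_of_derivative_le[OF \<open>s \<le> t\<close>])
    show "continuous_on {s..t} g"
      using g_cont by (rule continuous_on_subset) (use that in auto)
    show "(g has_real_derivative p x) (at x)" "p x \<le> k * int_exp \<beta> \<epsilon>" if "x \<in> {s<..<t}" for x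
      using g_deriv p_le that \<open>0 \<le> s\<close> \<open>t \<le> r\<close> \<open>r - s \<le> \<epsilon>\<close> by simp_all
  qed
  have "0 \<le> k * int_exp \<beta> \<epsilon>"
    using \<open>0 < k\<close> int_exp_pos[OF \<open>0 < \<epsilon>\<close>, of \<beta>] by simp
  show ?thesis
  proof (cases "r \<le> \<epsilon>")
    case True
    then have "g r - g 0 \<le> r * (k * int_exp \<beta> \<epsilon>)"
      using increment_le[of 0 r] \<open>0 < r\<close> by simp
    also have "\<dots> \<le> \<epsilon> * (k * int_exp \<beta> \<epsilon>)"
      using True \<open>0 \<le> k * int_exp \<beta> \<epsilon>\<close> by (rule mult_right_mono)
    finally show ?thesis using True by simp
  next
    case False
    have "g (r - \<epsilon>) - exp (\<beta> * \<epsilon>) * g r - (g 0 - exp (\<beta> * \<epsilon>) * g \<epsilon>)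
            = (r - \<epsilon>) * (k * int_exp \<beta> \<epsilon>)"
      using linear_ode_primitive_shift[OF \<open>0 < r\<close> g_cont g_deriv p_cont ode, of \<epsilon> "r - \<epsilon>"]
        False \<open>0 < \<epsilon>\<close> by simp
    moreover have "g \<epsilon> - g (r - \<epsilon>) \<le> (\<epsilon> - (r - \<epsilon>)) * (k * int_exp \<beta> \<epsilon>)"
      using increment_le[of "r - \<epsilon>" \<epsilon>] False \<open>r < 2 * \<epsilon>\<close> by simp
    ultimately show ?thesis
      using False by (simp add: algebra_simps)
  qed
qed

theorem lemma3p2:
  fixes \<beta> k r \<epsilon> :: real
    and \<gamma> \<gamma>' \<gamma>'' :: "real \<Rightarrow> real"
  assumes r_pos: "r > 0"
    and d1: "\<And>x. x \<in> {0..r} \<Longrightarrow> (\<gamma> has_real_derivative \<gamma>' x) (at x within {0..r})"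
    and d2: "\<And>x. x \<in> {0..r} \<Longrightarrow> (\<gamma>' has_real_derivative \<gamma>'' x) (at x within {0..r})"
    and cont2: "continuous_on {0..r} \<gamma>''"
    and ode: "\<And>x. x \<in> {0<..<r} \<Longrightarrow> - \<gamma>'' x - \<beta> * \<bar>\<gamma>' x\<bar> = k"
    and incr: "\<And>x. x \<in> {0<..<r} \<Longrightarrow> \<gamma>' x > 0"
    and eps_pos: "\<epsilon> > 0"
    and alt: "r \<ge> 2 * \<epsilon> \<or> \<gamma>' r = 0"
  shows "a_plus \<epsilon> \<beta> * (\<gamma> (min \<epsilon> r) - \<gamma> 0)
           - a_minus \<epsilon> \<beta> * (\<gamma> (min (2 * \<epsilon>) r) - \<gamma> (min \<epsilon> r)) \<le> \<epsilon> * k"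
proof -
  have \<gamma>_cont: "continuous_on {0..r} \<gamma>" and \<gamma>'_cont: "continuous_on {0..r} \<gamma>'"
    using DERIV_continuous_on d1 d2 by blast+
  have \<gamma>_deriv: "(\<gamma> has_real_derivative \<gamma>' x) (at x)" if "x \<in> {0<..<r}" for x
    using d1[of x] that by (simp add: at_within_Icc_at)
  have linear_ode: "(\<gamma>' has_real_derivative - k - \<beta> * \<gamma>' x) (at x)" if "x \<in> {0<..<r}" for x
  proof -
    have "- k - \<beta> * \<gamma>' x = \<gamma>'' x"
      using ode[OF that] incr[OF that] by simp
    with d2[of x] that show ?thesis by (simp add: at_within_Icc_at)
  qed
  have flux_le: "\<gamma> (min \<epsilon> r) - \<gamma> 0 - exp (\<beta> * \<epsilon>) * (\<gamma> (min (2 * \<epsilon>) r) - \<gamma> (min \<epsilon> r))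
      \<le> \<epsilon> * (k * int_exp \<beta> \<epsilon>)"
  proof (cases "2 * \<epsilon> \<le> r")
    case True
    then show ?thesis
      using linear_ode_primitive_shift[OF r_pos \<gamma>_cont \<gamma>_deriv \<gamma>'_cont linear_ode, of \<epsilon> \<epsilon>] eps_pos
      by (simp add: algebra_simps)
  next
    case False
    then show ?thesis
      using linear_ode_stopped_bound[OF r_pos \<gamma>_cont \<gamma>_deriv \<gamma>'_cont linear_ode incr] alt eps_pos
      by simp
  qed
  have "0 < int_exp \<beta> \<epsilon>"
    using eps_pos by (rule int_exp_pos)
  have "a_plus \<epsilon> \<beta> * (\<gamma> (min \<epsilon> r) - \<gamma> 0)
          - a_minus \<epsilon> \<beta> * (\<gamma> (min (2 * \<epsilon>) r) - \<gamma> (min \<epsilon> r))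
        = (\<gamma> (min \<epsilon> r) - \<gamma> 0 - exp (\<beta> * \<epsilon>) * (\<gamma> (min (2 * \<epsilon>) r) - \<gamma> (min \<epsilon> r)))
          / int_exp \<beta> \<epsilon>"
    by (simp add: a_plus_eq a_minus_eq diff_divide_distrib)
  also have "\<dots> \<le> \<epsilon> * (k * int_exp \<beta> \<epsilon>) / int_exp \<beta> \<epsilon>"
    using flux_le by (rule divide_right_mono) (use \<open>0 < int_exp \<beta> \<epsilon>\<close> in simp)
  also have "\<dots> = \<epsilon> * k"
    using \<open>0 < int_exp \<beta> \<epsilon>\<close> by simp
  finally show ?thesis .
qed

end
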